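(* Let $n \geq 2$ and let $I = \{i_1 < \cdots < i_k\} \subset [n-1]$ with $k \geq 1$. Then \[ \sum_J (-1)^d\, \partial_{e_{n-k-d}(x_1, \ldots, x_{n-1})}\, \mathrm{d}_{j_1} \cdots \mathrm{d}_{j_k} \Delta_n = 0, \] where the sum is over all subsets $J = \{j_1 < \cdots < j_k\} \subset [n-1]$ satisfying \[ 1 \leq i_1 \leq j_1 < i_2 \leq j_2 < i_3 \leq j_3 < \cdots < i_k \leq j_k < n, \] and $d = (j_1 - i_1) + \cdots + (j_k - i_k)$.
   Context: Work in $\mathbb{Q}[x_1, \ldots, x_n, \theta_1, \ldots, \theta_n]$ where the $x_i$ commute, the $\theta_i$ anticommute ($\theta_i\theta_j = -\theta_j\theta_i$), and $x_i$ commutes with $\theta_j$. $\Delta_n = \prod_{1 \leq i < j \leq n}(x_j - x_i)$. For a polynomial $g \in \mathbb{Q}[x_1,\ldots,x_n]$, $\partial_g$ is the differential operator obtained by substituting $\partial_{x_i}$ for $x_i$ in $g$. For $i \geq 1$, $\mathrm{d}_i = \sum_{j=1}^n \partial_{x_j}^i \theta_j$, i.e. $\mathrm{d}_i \omega = \sum_j \theta_j \,\partial_{x_j}^i \omega$ (left multiplication by $\theta_j$). $e_r(x_1, \ldots, x_m)$ is the elementary symmetric polynomial of degree $r$, with $e_0 = 1$ and $e_r = 0$ for $r < 0$ or $r > m$. *)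

theory Defs
  imports Complex_Main "HOL-Library.Poly_Mapping"
begin

(* Commutative polynomials in x_1, x_2, ... over Q: monomials are exponent
  vectors (nat \<Rightarrow>\<^sub>0 nat), a polynomial maps monomials to coefficients. *)
type_synonym xpoly = "(nat \<Rightarrow>\<^sub>0 nat) \<Rightarrow>\<^sub>0 rat"

(* Elements of Q[x, theta]: a function sending a finite set S = {s_1 < ... < s_m}
  to the x-polynomial coefficient of the ordered theta-monomial theta_{s_1}...theta_{s_m}. *)
type_synonym spoly = "nat set \<Rightarrow> xpoly"

definition X :: "nat \<Rightarrow> xpoly" where
  "X i = Poly_Mapping.single (Poly_Mapping.single i 1) 1"

definition Delta :: "nat \<Rightarrow> xpoly" where
  "Delta n = (\<Prod>i\<in>{1..n}. \<Prod>j\<in>{i<..n}. (X j - X i))"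

(* e_r(x_1,...,x_m), with e_r = 0 for r < 0 or r > m and e_0 = 1. *)
definition esym :: "int \<Rightarrow> nat \<Rightarrow> xpoly" where
  "esym r m = (if r < 0 then 0 else
     (\<Sum>T\<in>{T. T \<subseteq> {1..m} \<and> card T = nat r}. \<Prod>i\<in>T. X i))"

definition xderiv :: "nat \<Rightarrow> xpoly \<Rightarrow> xpoly" where
  "xderiv j p = (\<Sum>mo\<in>Poly_Mapping.keys p.
     Poly_Mapping.single (mo - Poly_Mapping.single j (1::nat))
       ((of_nat (Poly_Mapping.lookup mo j) :: rat) * Poly_Mapping.lookup p mo))"

definition mono_deriv :: "(nat \<Rightarrow>\<^sub>0 nat) \<Rightarrow> xpoly \<Rightarrow> xpoly" where
  "mono_deriv m p = foldr (\<lambda>i q. (xderiv i ^^ Poly_Mapping.lookup m i) q)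
                         (sorted_list_of_set (Poly_Mapping.keys m)) p"

definition diffop :: "xpoly \<Rightarrow> xpoly \<Rightarrow> xpoly" where
  "diffop g p = (\<Sum>m\<in>Poly_Mapping.keys g. Poly_Mapping.single 0 (Poly_Mapping.lookup g m) * mono_deriv m p)"

(* ... and on superspace polynomials (coefficientwise, x commutes with theta). *)
definition sdiffop :: "xpoly \<Rightarrow> spoly \<Rightarrow> spoly" where
  "sdiffop g \<omega> = (\<lambda>S. diffop g (\<omega> S))"

definition of_x :: "xpoly \<Rightarrow> spoly" where
  "of_x p = (\<lambda>S. if S = {} then p else 0)"

(* Left multiplication by theta_j. *)
definition theta_mul :: "nat \<Rightarrow> spoly \<Rightarrow> spoly" where
  "theta_mul j \<omega> = (\<lambda>S. if j \<in> S
      then (-1) ^ card {s\<in>S. s < j} * \<omega> (S - {j}) else 0)"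

definition dop :: "nat \<Rightarrow> nat \<Rightarrow> spoly \<Rightarrow> spoly" where
  "dop n i \<omega> = (\<lambda>S. \<Sum>j=1..n. theta_mul j (\<lambda>T. (xderiv j ^^ i) (\<omega> T)) S)"

(* d_{j 1} d_{j 2} ... d_{j k} applied to omega (d_{j k} acts first). *)
definition dops :: "nat \<Rightarrow> (nat \<Rightarrow> nat) \<Rightarrow> nat \<Rightarrow> spoly \<Rightarrow> spoly" where
  "dops n j k \<omega> = foldr (\<lambda>t w. dop n (j t) w) [1..<k+1] \<omega>"

(* Index sequences J interlacing I: i_1 \<le> j_1 < i_2 \<le> j_2 < ... < i_k \<le> j_k < n,
  represented as functions on {1..k}, extended by 0 elsewhere. *)
definition interlacing :: "nat \<Rightarrow> nat \<Rightarrow> (nat \<Rightarrow> nat) \<Rightarrow> (nat \<Rightarrow> nat) set" where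
  "interlacing n k i = {j. (\<forall>t\<in>{1..k}. i t \<le> j t) \<and>
                         (\<forall>t\<in>{1..<k}. j t < i (t+1)) \<and> j k < n \<and>
                         (\<forall>t. t \<notin> {1..k} \<longrightarrow> j t = 0)}"

end

theory Submission
  imports Defs "HOL-Library.Function_Algebras" "HOL-Combinatorics.Transposition"
begin

text \<open>
  Write \<open>\<partial>\<close> for \<open>\<partial>\<^bsub>x\<^sub>n\<^esub>\<close> and
  \<open>G\<^sub>c = \<Sum>\<^sub>l \<theta>\<^sub>l h\<^sub>c(\<partial>, \<partial>\<^bsub>x\<^sub>l\<^esub>) = \<Sum>\<^bsub>a \<le> c\<^esub> \<partial>\<^bsup>c-a\<^esup> d\<^sub>a\<close>;
  since the \<open>\<theta>\<^sub>l\<close> anticommute and the derivatives commute, \<open>G\<^sub>c G\<^sub>c = 0\<close>.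
  The Vandermonde \<open>\<Delta>\<^sub>n\<close> is killed by \<open>\<partial>\<^bsub>e\<^sub>r(x\<^sub>1,\<dots>,x\<^sub>n)\<^esub>\<close> for \<open>r \<ge> 1\<close>
  (it is antisymmetric of minimal degree), and so is everything obtained from it by the \<open>d\<^sub>i\<close>;
  on such elements \<open>\<partial>\<^bsub>e\<^sub>r(x\<^sub>1,\<dots>,x\<^bsub>n-1\<^esub>)\<^esub>\<close> acts as \<open>(-\<partial>)\<^sup>r\<close>.
  The signed sum therefore becomes \<open>\<plusminus>\<partial>\<^bsup>i\<^sub>1\<^esup> \<Phi>\<^sub>1\<close>, where
  \<open>\<Phi>\<^bsub>k+1\<^esub> = \<Delta>\<^sub>n\<close>, \<open>i\<^bsub>k+1\<^esub> = n\<close> and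
  \<open>\<Phi>\<^sub>t = \<Sum>\<^bsub>i\<^sub>t \<le> j < i\<^bsub>t+1\<^esub>\<^esub> \<partial>\<^bsup>i\<^bsub>t+1\<^esub>-1-j\<^esup> d\<^sub>j \<Phi>\<^bsub>t+1\<^esub>
     = G\<^bsub>i\<^bsub>t+1\<^esub>-1\<^esub> \<Phi>\<^bsub>t+1\<^esub> - \<partial>\<^bsup>i\<^bsub>t+1\<^esub>-i\<^sub>t\<^esup> G\<^bsub>i\<^sub>t-1\<^esub> \<Phi>\<^bsub>t+1\<^esub>\<close>.
  This identity and \<open>G\<^sub>c G\<^sub>c = 0\<close> carry the invariant
  \<open>\<partial>\<^sup>b \<Phi> = 0 \<and> \<partial> G\<^bsub>b-1\<^esub> \<Phi> = 0\<close> from \<open>b = i\<^bsub>t+1\<^esub>\<close> to \<open>b = i\<^sub>t\<close>.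
  For \<open>\<Delta>\<^sub>n\<close> and \<open>b = n\<close> it holds because harmonicity gives \<open>\<partial>\<^sup>n \<Delta>\<^sub>n = 0\<close> and
  \<open>h\<^bsub>n-1\<^esub>(\<partial>, \<partial>\<^bsub>x\<^sub>l\<^esub>) \<Delta>\<^sub>n = 0\<close> for \<open>l < n\<close>.
\<close>

section \<open>Additive maps\<close>

definition additive_map :: "('a::ab_group_add \<Rightarrow> 'b::ab_group_add) \<Rightarrow> bool" where
  "additive_map f \<longleftrightarrow> (\<forall>x y. f (x + y) = f x + f y)"

lemma additive_mapI: "(\<And>x y. f (x + y) = f x + f y) \<Longrightarrow> additive_map f"
  by (simp add: additive_map_def)

lemma additive_map_add: "additive_map f \<Longrightarrow> f (x + y) = f x + f y"
  by (simp add: additive_map_def)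

lemma additive_map_zero: "additive_map f \<Longrightarrow> f 0 = 0"
  using additive_map_add[of f 0 0] by simp

lemma additive_map_uminus: "additive_map f \<Longrightarrow> f (- x) = - f x"
  using additive_map_add[of f x "- x"] additive_map_zero[of f] by (simp add: add_eq_0_iff2)

lemma additive_map_diff: "additive_map f \<Longrightarrow> f (x - y) = f x - f y"
  using additive_map_add[of f x "- y"] additive_map_uminus[of f y] by simp

lemma additive_map_sum: "additive_map f \<Longrightarrow> f (sum g A) = (\<Sum>a\<in>A. f (g a))"
  by (induction A rule: infinite_finite_induct) (auto simp: additive_map_zero additive_map_add)

lemma additive_map_minus_one_power:
  fixes f :: "'a::ring_1 \<Rightarrow> 'b::ring_1"
  assumes "additive_map f"
  shows "f ((-1) ^ r * x) = (-1) ^ r * f x"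
  by (cases "even r") (simp_all add: additive_map_uminus[OF assms])

lemma additive_map_comp: "additive_map f \<Longrightarrow> additive_map g \<Longrightarrow> additive_map (\<lambda>x. f (g x))"
  by (simp add: additive_map_def)

lemma additive_map_funpow: "additive_map (f :: 'a::ab_group_add \<Rightarrow> 'a) \<Longrightarrow> additive_map (f ^^ e)"
  unfolding additive_map_def by (induction e) simp_all

lemma additive_map_foldr: "(\<And>i. additive_map (f i)) \<Longrightarrow> additive_map (foldr f xs)"
  by (induction xs) (auto simp: additive_map_def)

lemma additive_map_sum_fun:
  "(\<And>a. a \<in> A \<Longrightarrow> additive_map (f a)) \<Longrightarrow> additive_map (\<lambda>x. \<Sum>a\<in>A. f a x)"
  by (simp add: additive_map_def sum.distrib)

lemma sum_apply: "(\<Sum>a\<in>A. f a) x = (\<Sum>a\<in>A. f a x)"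
  by (induction A rule: infinite_finite_induct) simp_all

lemma poly_mapping_eq_sum_single:
  "p = (\<Sum>m\<in>Poly_Mapping.keys p. Poly_Mapping.single m (Poly_Mapping.lookup p m))"
proof (rule poly_mapping_eqI)
  fix k
  have "(\<Sum>m\<in>Poly_Mapping.keys p. Poly_Mapping.lookup (Poly_Mapping.single m (Poly_Mapping.lookup p m)) k)
      = (\<Sum>m\<in>Poly_Mapping.keys p. if m = k then Poly_Mapping.lookup p m else 0)"
    by (rule sum.cong) (auto simp: lookup_single when_def)
  then show "Poly_Mapping.lookup p k =
      Poly_Mapping.lookup (\<Sum>m\<in>Poly_Mapping.keys p. Poly_Mapping.single m (Poly_Mapping.lookup p m)) k"
    by (simp add: lookup_sum sum.delta in_keys_iff)
qed

lemma additive_map_poly_mapping_eqI: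
  fixes L L' :: "('a \<Rightarrow>\<^sub>0 'b::ab_group_add) \<Rightarrow> 'c::ab_group_add"
  assumes "additive_map L" "additive_map L'"
    and "\<And>m c. L (Poly_Mapping.single m c) = L' (Poly_Mapping.single m c)"
  shows "L p = L' p"
  using assms by (subst (1 2) poly_mapping_eq_sum_single) (simp add: additive_map_sum)

section \<open>Substituting derivatives for variables\<close>

lemma xderiv_eq_sum_superset:
  assumes "finite K" "Poly_Mapping.keys p \<subseteq> K"
  shows "xderiv j p = (\<Sum>a\<in>K. Poly_Mapping.single (a - Poly_Mapping.single j 1)
       (of_nat (Poly_Mapping.lookup a j) * Poly_Mapping.lookup p a))"
  unfolding xderiv_def by (rule sum.mono_neutral_left) (use assms in \<open>auto simp: in_keys_iff\<close>)

lemma additive_map_xderiv: "additive_map (xderiv j)"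
proof (rule additive_mapI)
  fix p q :: xpoly
  let ?K = "Poly_Mapping.keys p \<union> Poly_Mapping.keys q"
  show "xderiv j (p + q) = xderiv j p + xderiv j q"
    by (simp add: xderiv_eq_sum_superset[of ?K] keys_add lookup_add distrib_left single_add sum.distrib)
qed

lemma xderiv_single:
  "xderiv j (Poly_Mapping.single a c) =
     Poly_Mapping.single (a - Poly_Mapping.single j 1) (of_nat (Poly_Mapping.lookup a j) * c)"
  by (simp add: xderiv_eq_sum_superset[of "{a}"])

text \<open>For \<open>x < e\<close> the factor \<open>t = x\<close> vanishes, so truncated subtraction does no harm.\<close>

definition falling_fact :: "nat \<Rightarrow> nat \<Rightarrow> rat" where
  "falling_fact x e = (\<Prod>t<e. of_nat (x - t))"

lemma falling_fact_0 [simp]: "falling_fact x 0 = 1"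
  by (simp add: falling_fact_def)

lemma falling_fact_Suc: "falling_fact x (Suc e) = falling_fact x e * of_nat (x - e)"
  by (simp add: falling_fact_def)

lemma falling_fact_add: "falling_fact x (e + e') = falling_fact x e * falling_fact (x - e) e'"
  by (induction e') (simp_all add: falling_fact_Suc)

lemma falling_fact_eq_0: "x < e \<Longrightarrow> falling_fact x e = 0"
  unfolding falling_fact_def by (rule prod_zero) auto

lemma funpow_xderiv_single:
  "(xderiv j ^^ e) (Poly_Mapping.single a c) =
     Poly_Mapping.single (a - Poly_Mapping.single j e) (c * falling_fact (Poly_Mapping.lookup a j) e)"
proof (induction e)
  case (Suc e)
  have "a - Poly_Mapping.single j e - Poly_Mapping.single j 1 = a - Poly_Mapping.single j (Suc e)"
    by (rule poly_mapping_eqI) (simp add: lookup_minus lookup_single when_def)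
  then show ?case
    using Suc by (simp add: xderiv_single falling_fact_Suc lookup_minus algebra_simps)
qed simp

definition mono_falling_fact :: "(nat \<Rightarrow>\<^sub>0 nat) \<Rightarrow> (nat \<Rightarrow>\<^sub>0 nat) \<Rightarrow> rat" where
  "mono_falling_fact a m =
     (\<Prod>i\<in>Poly_Mapping.keys m. falling_fact (Poly_Mapping.lookup a i) (Poly_Mapping.lookup m i))"

lemma mono_falling_fact_eq_prod_superset:
  "finite K \<Longrightarrow> Poly_Mapping.keys m \<subseteq> K \<Longrightarrow>
     mono_falling_fact a m = (\<Prod>i\<in>K. falling_fact (Poly_Mapping.lookup a i) (Poly_Mapping.lookup m i))"
  unfolding mono_falling_fact_def by (rule prod.mono_neutral_left) (auto simp: in_keys_iff)

lemma mono_falling_fact_add: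
  "mono_falling_fact a (m + m') = mono_falling_fact a m' * mono_falling_fact (a - m') m"
proof -
  let ?K = "Poly_Mapping.keys m \<union> Poly_Mapping.keys m'"
  have "mono_falling_fact a (m + m') =
      (\<Prod>i\<in>?K. falling_fact (Poly_Mapping.lookup a i) (Poly_Mapping.lookup m' i + Poly_Mapping.lookup m i))"
    by (simp add: mono_falling_fact_eq_prod_superset[of ?K] keys_add lookup_add add.commute)
  also have "\<dots> = (\<Prod>i\<in>?K. falling_fact (Poly_Mapping.lookup a i) (Poly_Mapping.lookup m' i) *
      falling_fact (Poly_Mapping.lookup (a - m') i) (Poly_Mapping.lookup m i))"
    by (simp add: falling_fact_add lookup_minus)
  also have "\<dots> = mono_falling_fact a m' * mono_falling_fact (a - m') m"
    by (simp add: prod.distrib mono_falling_fact_eq_prod_superset[of ?K])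
  finally show ?thesis .
qed

lemma mono_falling_fact_nonzero_le:
  assumes "mono_falling_fact a m \<noteq> 0"
  shows "Poly_Mapping.lookup m i \<le> Poly_Mapping.lookup a i"
proof (rule ccontr)
  assume less: "\<not> Poly_Mapping.lookup m i \<le> Poly_Mapping.lookup a i"
  then have "i \<in> Poly_Mapping.keys m"
    by (auto simp: in_keys_iff)
  moreover have "falling_fact (Poly_Mapping.lookup a i) (Poly_Mapping.lookup m i) = 0"
    using less by (simp add: falling_fact_eq_0)
  ultimately show False
    using assms unfolding mono_falling_fact_def by (simp add: prod_zero_iff)
qed

lemma foldr_funpow_xderiv_single:
  assumes "distinct xs"
  shows "foldr (\<lambda>i. xderiv i ^^ Poly_Mapping.lookup m i) xs (Poly_Mapping.single a c) =
    Poly_Mapping.single (a - (\<Sum>i\<in>set xs. Poly_Mapping.single i (Poly_Mapping.lookup m i)))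
       (c * (\<Prod>i\<in>set xs. falling_fact (Poly_Mapping.lookup a i) (Poly_Mapping.lookup m i)))"
  using assms
proof (induction xs)
  case (Cons x xs)
  let ?s = "\<Sum>i\<in>set xs. Poly_Mapping.single i (Poly_Mapping.lookup m i)"
  let ?c = "\<Prod>i\<in>set xs. falling_fact (Poly_Mapping.lookup a i) (Poly_Mapping.lookup m i)"
  let ?f = "falling_fact (Poly_Mapping.lookup a x) (Poly_Mapping.lookup m x)"
  have x: "x \<notin> set xs"
    using Cons.prems by simp
  then have "Poly_Mapping.lookup ?s x = 0"
    by (auto simp: lookup_sum lookup_single when_def intro!: sum.neutral)
  then have lookup_x: "Poly_Mapping.lookup (a - ?s) x = Poly_Mapping.lookup a x"
    by (simp add: lookup_minus)
  have diff: "a - ?s - Poly_Mapping.single x (Poly_Mapping.lookup m x) =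
      a - (Poly_Mapping.single x (Poly_Mapping.lookup m x) + ?s)"
    by (rule poly_mapping_eqI) (simp add: lookup_minus lookup_add)
  have sum: "Poly_Mapping.single x (Poly_Mapping.lookup m x) + ?s =
      (\<Sum>i\<in>set (x # xs). Poly_Mapping.single i (Poly_Mapping.lookup m i))"
    by (simp only: list.set sum.insert[OF finite_set x])
  have prod: "c * ?c * ?f =
      c * (\<Prod>i\<in>set (x # xs). falling_fact (Poly_Mapping.lookup a i) (Poly_Mapping.lookup m i))"
    by (simp only: list.set prod.insert[OF finite_set x] ac_simps)
  have "foldr (\<lambda>i. xderiv i ^^ Poly_Mapping.lookup m i) (x # xs) (Poly_Mapping.single a c) =
      (xderiv x ^^ Poly_Mapping.lookup m x) (Poly_Mapping.single (a - ?s) (c * ?c))"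
    using Cons by simp
  also have "\<dots> = Poly_Mapping.single (a - (Poly_Mapping.single x (Poly_Mapping.lookup m x) + ?s))
      (c * ?c * ?f)"
    by (simp only: funpow_xderiv_single diff lookup_x)
  finally show ?case
    by (simp only: sum prod)
qed simp

lemma mono_deriv_single:
  "mono_deriv m (Poly_Mapping.single a c) = Poly_Mapping.single (a - m) (c * mono_falling_fact a m)"
  unfolding mono_deriv_def mono_falling_fact_def
  by (simp add: foldr_funpow_xderiv_single flip: poly_mapping_eq_sum_single)

lemma additive_map_mono_deriv: "additive_map (mono_deriv m)"
  unfolding mono_deriv_def[abs_def]
  by (intro additive_map_foldr additive_map_funpow additive_map_xderiv)

lemma diffop_eq_sum_superset:
  "finite K \<Longrightarrow> Poly_Mapping.keys g \<subseteq> K \<Longrightarrow>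
     diffop g p = (\<Sum>m\<in>K. Poly_Mapping.single 0 (Poly_Mapping.lookup g m) * mono_deriv m p)"
  unfolding diffop_def by (rule sum.mono_neutral_left) (auto simp: in_keys_iff)

lemma additive_map_diffop: "additive_map (diffop g)"
proof -
  have "additive_map (\<lambda>p::xpoly. Poly_Mapping.single 0 c * p)" for c
    by (rule additive_mapI) (simp add: distrib_left)
  then show ?thesis
    unfolding diffop_def[abs_def]
    by (intro additive_map_sum_fun additive_map_comp[OF _ additive_map_mono_deriv])
qed

lemma diffop_add_left: "diffop (f + g) p = diffop f p + diffop g p"
proof -
  let ?K = "Poly_Mapping.keys f \<union> Poly_Mapping.keys g"
  show ?thesis
    by (simp add: diffop_eq_sum_superset[of ?K] keys_add lookup_add distrib_right single_add
        sum.distrib)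
qed

lemma additive_map_diffop_left: "additive_map (\<lambda>g. diffop g p)"
  by (rule additive_mapI) (rule diffop_add_left)

lemma diffop_single_single:
  "diffop (Poly_Mapping.single m c) (Poly_Mapping.single a d) =
     Poly_Mapping.single (a - m) (c * d * mono_falling_fact a m)"
  by (simp add: diffop_eq_sum_superset[of "{m}"] mono_deriv_single mult_single mult.assoc)

lemma diffop_mult_single:
  "diffop (Poly_Mapping.single m c * Poly_Mapping.single m' c') p =
     diffop (Poly_Mapping.single m c) (diffop (Poly_Mapping.single m' c') p)"
proof (rule additive_map_poly_mapping_eqI[of _ "\<lambda>p. diffop _ (diffop _ p)"])
  show "additive_map (\<lambda>p. diffop (Poly_Mapping.single m c) (diffop (Poly_Mapping.single m' c') p))"
    by (rule additive_map_comp[OF additive_map_diffop additive_map_diffop])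
  fix a d
  have "a - (m + m') = a - m' - m"
    by (rule poly_mapping_eqI) (simp add: lookup_minus lookup_add)
  moreover have "c * c' * d * (mono_falling_fact a m' * mono_falling_fact (a - m') m) =
      c * (c' * d * mono_falling_fact a m') * mono_falling_fact (a - m') m"
    by (simp only: ac_simps)
  ultimately show "diffop (Poly_Mapping.single m c * Poly_Mapping.single m' c') (Poly_Mapping.single a d) =
      diffop (Poly_Mapping.single m c) (diffop (Poly_Mapping.single m' c') (Poly_Mapping.single a d))"
    by (simp only: mult_single diffop_single_single mono_falling_fact_add)
qed (rule additive_map_diffop)

lemma diffop_mult_single_left:
  "diffop (Poly_Mapping.single m c * g) p = diffop (Poly_Mapping.single m c) (diffop g p)"
proof (rule additive_map_poly_mapping_eqI[of "\<lambda>g. diffop (Poly_Mapping.single m c * g) p"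
      "\<lambda>g. diffop (Poly_Mapping.single m c) (diffop g p)"])
  show "additive_map (\<lambda>g. diffop (Poly_Mapping.single m c * g) p)"
    by (rule additive_mapI) (simp add: distrib_left diffop_add_left)
  show "additive_map (\<lambda>g. diffop (Poly_Mapping.single m c) (diffop g p))"
    by (rule additive_map_comp[OF additive_map_diffop additive_map_diffop_left])
qed (rule diffop_mult_single)

lemma diffop_mult: "diffop (f * g) p = diffop f (diffop g p)"
proof (rule additive_map_poly_mapping_eqI[of "\<lambda>f. diffop (f * g) p" "\<lambda>f. diffop f (diffop g p)"])
  show "additive_map (\<lambda>f. diffop (f * g) p)"
    by (rule additive_mapI) (simp add: distrib_right diffop_add_left)
qed (simp_all add: additive_map_diffop_left diffop_mult_single_left)

lemma diffop_one: "diffop 1 p = p"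
  by (simp add: diffop_def mono_deriv_def)

lemma diffop_X: "diffop (X j) p = xderiv j p"
proof (rule additive_map_poly_mapping_eqI[OF additive_map_diffop additive_map_xderiv])
  fix a c
  show "diffop (X j) (Poly_Mapping.single a c) = xderiv j (Poly_Mapping.single a c)"
    by (simp add: X_def diffop_single_single xderiv_single mono_falling_fact_def
        falling_fact_def mult.commute)
qed

lemma diffop_X_power: "diffop (X j ^ e) p = (xderiv j ^^ e) p"
  by (induction e arbitrary: p) (simp_all add: diffop_one diffop_mult diffop_X)

lemma diffop_commute: "diffop f (diffop g p) = diffop g (diffop f p)"
  unfolding diffop_mult[symmetric] by (simp only: mult.commute)

lemma diffop_zero_left [simp]: "diffop 0 p = 0"
  by (simp add: diffop_def)

lemma diffop_zero_right [simp]: "diffop g 0 = 0"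
  by (rule additive_map_zero[OF additive_map_diffop])

lemma diffop_sum_left: "diffop (sum f A) p = (\<Sum>a\<in>A. diffop (f a) p)"
  by (rule additive_map_sum[OF additive_map_diffop_left])

lemma diffop_uminus_right: "diffop g (- p) = - diffop g p"
  by (rule additive_map_uminus[OF additive_map_diffop])

section \<open>Harmonic polynomials\<close>

definition esym_set :: "nat \<Rightarrow> nat set \<Rightarrow> xpoly" where
  "esym_set r T = (\<Sum>U\<in>{U. U \<subseteq> T \<and> card U = r}. \<Prod>i\<in>U. X i)"

lemma esym_eq_esym_set: "esym r m = (if r < 0 then 0 else esym_set (nat r) {1..m})"
  by (simp add: esym_def esym_set_def)

lemma esym_set_0: "finite T \<Longrightarrow> esym_set 0 T = 1"
proof -
  assume "finite T"
  then have "{U. U \<subseteq> T \<and> card U = 0} = {{}}"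
    by (auto dest: finite_subset)
  then show ?thesis
    by (simp add: esym_set_def)
qed

lemma esym_set_eq_0: "finite T \<Longrightarrow> card T < r \<Longrightarrow> esym_set r T = 0"
proof -
  assume "finite T" "card T < r"
  then have "{U. U \<subseteq> T \<and> card U = r} = {}"
    by (auto dest: card_mono)
  then show ?thesis
    unfolding esym_set_def by (simp only: sum.empty)
qed

lemma subsets_card_Suc_insert:
  assumes "finite T" and "v \<notin> T"
  shows "{U. U \<subseteq> insert v T \<and> card U = Suc r} =
    {U. U \<subseteq> T \<and> card U = Suc r} \<union> insert v ` {U. U \<subseteq> T \<and> card U = r}"
proof (intro set_eqI iffI)
  fix U
  assume U: "U \<in> {U. U \<subseteq> insert v T \<and> card U = Suc r}"
  then have "finite U"
    using assms(1) by (auto dest: finite_subset)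
  show "U \<in> {U. U \<subseteq> T \<and> card U = Suc r} \<union> insert v ` {U. U \<subseteq> T \<and> card U = r}"
  proof (cases "v \<in> U")
    case True
    then have "U = insert v (U - {v})" and "U - {v} \<in> {U. U \<subseteq> T \<and> card U = r}"
      using U \<open>finite U\<close> by auto
    then show ?thesis
      by blast
  qed (use U in blast)
next
  fix U
  assume "U \<in> {U. U \<subseteq> T \<and> card U = Suc r} \<union> insert v ` {U. U \<subseteq> T \<and> card U = r}"
  moreover have "card (insert v U') = Suc r" if "U' \<subseteq> T" "card U' = r" for U'
    using that assms finite_subset[of U' T] by (auto simp: card_insert_if)
  ultimately show "U \<in> {U. U \<subseteq> insert v T \<and> card U = Suc r}"
    by auto
qed

lemma esym_set_insert:
  assumes "finite T" and "v \<notin> T"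
  shows "esym_set (Suc r) (insert v T) = esym_set (Suc r) T + X v * esym_set r T"
proof -
  let ?A = "{U. U \<subseteq> T \<and> card U = Suc r}"
  let ?C = "{U. U \<subseteq> T \<and> card U = r}"
  have fin: "finite ?A" "finite ?C"
    using assms(1) by (auto intro: finite_subset[of _ "Pow T"])
  have inj: "inj_on (insert v) ?C"
  proof (rule inj_onI)
    fix U U'
    assume "U \<in> ?C" "U' \<in> ?C" "insert v U = insert v U'"
    then show "U = U'"
      using assms(2) insert_ident[of v U U'] by blast
  qed
  have "esym_set (Suc r) (insert v T) = esym_set (Suc r) T + (\<Sum>U\<in>?C. \<Prod>i\<in>insert v U. X i)"
    unfolding esym_set_def subsets_card_Suc_insert[OF assms]
    using fin assms(2) by (subst sum.union_disjoint) (auto simp: sum.reindex[OF inj])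
  also have "(\<Sum>U\<in>?C. \<Prod>i\<in>insert v U. X i) = X v * esym_set r T"
    unfolding esym_set_def sum_distrib_left
  proof (intro sum.cong refl)
    fix U
    assume "U \<in> ?C"
    then have "finite U" "v \<notin> U"
      using assms finite_subset by auto
    then show "(\<Prod>i\<in>insert v U. X i) = X v * (\<Prod>i\<in>U. X i)"
      by simp
  qed
  finally show ?thesis .
qed

definition harmonic :: "nat set \<Rightarrow> xpoly \<Rightarrow> bool" where
  "harmonic T p \<longleftrightarrow> (\<forall>r\<ge>1. diffop (esym_set r T) p = 0)"

lemma harmonic_diffop: "harmonic T p \<Longrightarrow> harmonic T (diffop g p)"
  unfolding harmonic_def using diffop_commute[of _ g p] by simp

lemma harmonic_zero: "harmonic T 0"
  by (simp add: harmonic_def)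

lemma harmonic_add: "harmonic T p \<Longrightarrow> harmonic T q \<Longrightarrow> harmonic T (p + q)"
  by (simp add: harmonic_def additive_map_add[OF additive_map_diffop])

lemma harmonic_minus_one_power: "harmonic T p \<Longrightarrow> harmonic T ((-1) ^ r * p)"
  by (simp add: harmonic_def additive_map_minus_one_power[OF additive_map_diffop])

lemma harmonic_sum: "(\<And>a. a \<in> A \<Longrightarrow> harmonic T (f a)) \<Longrightarrow> harmonic T (sum f A)"
  by (induction A rule: infinite_finite_induct) (auto simp: harmonic_zero harmonic_add)

text \<open>
  On \<open>p\<close>, \<open>e\<^sub>r(x\<^bsub>T \<union> {v}\<^esub>) = e\<^sub>r(x\<^sub>T) + x\<^sub>v e\<^bsub>r-1\<^esub>(x\<^sub>T)\<close> acts as zero for \<open>r \<ge> 1\<close>,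
  so \<open>e\<^sub>r(x\<^sub>T)\<close> acts as \<open>(-x\<^sub>v)\<^sup>r\<close>.\<close>

lemma diffop_esym_set_harmonic:
  assumes "finite T" "v \<notin> T" "harmonic (insert v T) p"
  shows "diffop (esym_set r T) p = (-1) ^ r * diffop (X v ^ r) p"
proof (induction r)
  case 0
  then show ?case
    using assms(1) by (simp add: esym_set_0 diffop_one)
next
  case (Suc r)
  have "0 = diffop (esym_set (Suc r) (insert v T)) p"
    using assms(3) unfolding harmonic_def by simp
  also have "\<dots> = diffop (esym_set (Suc r) T) p + diffop (X v) (diffop (esym_set r T) p)"
    by (simp add: esym_set_insert[OF assms(1,2)] diffop_add_left diffop_mult)
  also have "diffop (X v) (diffop (esym_set r T) p) = (-1) ^ r * diffop (X v ^ Suc r) p"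
    by (simp add: Suc additive_map_minus_one_power[OF additive_map_diffop] diffop_mult)
  finally show ?case
    by (simp add: add_eq_0_iff2)
qed

lemma diffop_X_power_harmonic_eq_0:
  assumes "finite T" "v \<notin> T" "harmonic (insert v T) p"
  shows "diffop (X v ^ Suc (card T)) p = 0"
proof -
  have "(-1) ^ Suc (card T) * diffop (X v ^ Suc (card T)) p = 0"
    using diffop_esym_set_harmonic[OF assms, of "Suc (card T)"] esym_set_eq_0[OF assms(1)] by simp
  then show ?thesis
    by simp
qed

definition complete_hom2 :: "nat \<Rightarrow> nat \<Rightarrow> nat \<Rightarrow> xpoly" where
  "complete_hom2 c u v = (\<Sum>a\<le>c. X u ^ (c - a) * X v ^ a)"

lemma complete_hom2_Suc: "complete_hom2 (Suc c) u v = X v ^ Suc c + X u * complete_hom2 c u v"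
  by (simp add: complete_hom2_def sum_distrib_left Suc_diff_le mult.assoc)

text \<open>
  Here \<open>e\<^sub>r(x\<^sub>R)\<close> acts on \<open>p\<close> as \<open>(-1)\<^sup>r h\<^sub>r(x\<^sub>v, x\<^sub>l)\<close>, and \<open>e\<^bsub>|R|+1\<^esub>(x\<^sub>R) = 0\<close>.\<close>

lemma diffop_complete_hom2_harmonic_eq_0:
  assumes "finite R" "l \<notin> R" "v \<notin> R" "l \<noteq> v" "harmonic (insert l (insert v R)) p"
  shows "diffop (complete_hom2 (Suc (card R)) v l) p = 0"
proof -
  have esym_R: "diffop (esym_set r R) p = (-1) ^ r * diffop (complete_hom2 r v l) p" for r
  proof (induction r)
    case 0
    then show ?case
      using assms(1) by (simp add: esym_set_0 complete_hom2_def diffop_one)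
  next
    case (Suc r)
    have "(-1) ^ Suc r * diffop (X l ^ Suc r) p = diffop (esym_set (Suc r) (insert v R)) p"
      using assms by (intro diffop_esym_set_harmonic[symmetric]) auto
    also have "\<dots> = diffop (esym_set (Suc r) R) p + diffop (X v) (diffop (esym_set r R) p)"
      by (simp add: esym_set_insert[OF assms(1,3)] diffop_add_left diffop_mult)
    finally show ?case
      by (simp add: Suc complete_hom2_Suc additive_map_minus_one_power[OF additive_map_diffop]
          diffop_add_left diffop_mult algebra_simps)
  qed
  show ?thesis
    using esym_R[of "Suc (card R)"] esym_set_eq_0[OF assms(1)] by simp
qed

section \<open>The Vandermonde determinant is harmonic\<close>

lemma lookup_map_key_transpose:
  "Poly_Mapping.lookup (Poly_Mapping.map_key (transpose a b) m) i = Poly_Mapping.lookup m (transpose a b i)"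
  by (simp add: map_key.rep_eq inj_transpose)

lemma map_key_transpose_involutory [simp]:
  "Poly_Mapping.map_key (transpose a b) (Poly_Mapping.map_key (transpose a b) m) = m"
  by (rule poly_mapping_eqI) (simp add: lookup_map_key_transpose)

lemma map_key_transpose_single:
  "Poly_Mapping.map_key (transpose a b) (Poly_Mapping.single i e) = Poly_Mapping.single (transpose a b i) e"
  using map_key_single[OF inj_transpose, of a b "transpose a b i" e] by simp

lemma inj_map_key_transpose: "inj (Poly_Mapping.map_key (transpose a b))"
  by (rule inj_on_inverseI[where g = "Poly_Mapping.map_key (transpose a b)"]) simp

definition swap_vars :: "nat \<Rightarrow> nat \<Rightarrow> xpoly \<Rightarrow> xpoly" where
  "swap_vars a b = Poly_Mapping.map_key (Poly_Mapping.map_key (transpose a b))"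

lemma lookup_swap_vars:
  "Poly_Mapping.lookup (swap_vars a b p) m = Poly_Mapping.lookup p (Poly_Mapping.map_key (transpose a b) m)"
  by (simp add: swap_vars_def map_key.rep_eq inj_map_key_transpose)

lemma swap_vars_single:
  "swap_vars a b (Poly_Mapping.single m c) = Poly_Mapping.single (Poly_Mapping.map_key (transpose a b) m) c"
  by (rule poly_mapping_eqI) (auto simp: lookup_swap_vars lookup_single when_def)

lemma additive_map_swap_vars: "additive_map (swap_vars a b)"
  by (rule additive_mapI, rule poly_mapping_eqI) (simp add: lookup_swap_vars lookup_add)

lemma swap_vars_diff: "swap_vars a b (p - q) = swap_vars a b p - swap_vars a b q"
  by (rule additive_map_diff[OF additive_map_swap_vars])

lemma swap_vars_uminus: "swap_vars a b (- p) = - swap_vars a b p"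
  by (rule additive_map_uminus[OF additive_map_swap_vars])

lemma swap_vars_sum: "swap_vars a b (sum f A) = (\<Sum>i\<in>A. swap_vars a b (f i))"
  by (rule additive_map_sum[OF additive_map_swap_vars])

lemma swap_vars_mult: "swap_vars a b (p * q) = swap_vars a b p * swap_vars a b q"
proof -
  have map_key_add: "Poly_Mapping.map_key (transpose a b) (m + m') =
      Poly_Mapping.map_key (transpose a b) m + Poly_Mapping.map_key (transpose a b) m'" for m m'
    by (rule map_key_plus[OF inj_transpose])
  have single: "swap_vars a b (Poly_Mapping.single m c * q) =
      swap_vars a b (Poly_Mapping.single m c) * swap_vars a b q" for m c
  proof (rule additive_map_poly_mapping_eqI[of "\<lambda>q. swap_vars a b (Poly_Mapping.single m c * q)"
        "\<lambda>q. swap_vars a b (Poly_Mapping.single m c) * swap_vars a b q"])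
    show "additive_map (\<lambda>q. swap_vars a b (Poly_Mapping.single m c * q))"
      by (rule additive_mapI) (simp add: distrib_left additive_map_add[OF additive_map_swap_vars])
    show "additive_map (\<lambda>q. swap_vars a b (Poly_Mapping.single m c) * swap_vars a b q)"
      by (rule additive_mapI) (simp add: distrib_left additive_map_add[OF additive_map_swap_vars])
  qed (simp add: mult_single swap_vars_single map_key_add)
  show ?thesis
  proof (rule additive_map_poly_mapping_eqI[of "\<lambda>p. swap_vars a b (p * q)"
        "\<lambda>p. swap_vars a b p * swap_vars a b q"])
    show "additive_map (\<lambda>p. swap_vars a b (p * q))"
      by (rule additive_mapI) (simp add: distrib_right additive_map_add[OF additive_map_swap_vars])
    show "additive_map (\<lambda>p. swap_vars a b p * swap_vars a b q)"
      by (rule additive_mapI) (simp add: distrib_right additive_map_add[OF additive_map_swap_vars])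
  qed (rule single)
qed

lemma swap_vars_prod: "swap_vars a b (prod f A) = (\<Prod>i\<in>A. swap_vars a b (f i))"
proof (induction A rule: infinite_finite_induct)
  case (infinite A)
  have "swap_vars a b 1 = 1"
    using swap_vars_single[of a b 0 1] by (simp add: map_key_zero[OF inj_transpose])
  then show ?case
    using infinite by simp
next
  case empty
  show ?case
    using swap_vars_single[of a b 0 1] by (simp add: map_key_zero[OF inj_transpose])
qed (simp add: swap_vars_mult)

lemma swap_vars_X: "swap_vars a b (X i) = X (transpose a b i)"
  by (simp add: X_def swap_vars_single map_key_transpose_single)

lemma map_key_transpose_diff:
  "Poly_Mapping.map_key (transpose a b) (m - m') =
     Poly_Mapping.map_key (transpose a b) m - Poly_Mapping.map_key (transpose a b) m'"
  by (rule poly_mapping_eqI) (simp add: lookup_map_key_transpose lookup_minus)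

lemma transpose_vimage: "transpose a b -` K = transpose a b ` K"
proof (rule set_eqI)
  fix x
  show "x \<in> transpose a b -` K \<longleftrightarrow> x \<in> transpose a b ` K"
    using image_eqI[of x "transpose a b" "transpose a b x" K] by auto
qed

lemma mono_falling_fact_map_key_transpose:
  "mono_falling_fact (Poly_Mapping.map_key (transpose a b) x) (Poly_Mapping.map_key (transpose a b) m) =
     mono_falling_fact x m"
proof -
  have "Poly_Mapping.keys (Poly_Mapping.map_key (transpose a b) m) = transpose a b ` Poly_Mapping.keys m"
    by (simp add: keys_map_key[OF inj_transpose] transpose_vimage)
  then show ?thesis
    unfolding mono_falling_fact_def
    by (simp add: prod.reindex lookup_map_key_transpose)
qed

lemma swap_vars_diffop: "swap_vars a b (diffop g p) = diffop (swap_vars a b g) (swap_vars a b p)"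
proof -
  have single: "swap_vars a b (diffop (Poly_Mapping.single m c) p) =
      diffop (swap_vars a b (Poly_Mapping.single m c)) (swap_vars a b p)" for m c
  proof (rule additive_map_poly_mapping_eqI[of "\<lambda>p. swap_vars a b (diffop (Poly_Mapping.single m c) p)"
        "\<lambda>p. diffop (swap_vars a b (Poly_Mapping.single m c)) (swap_vars a b p)"])
    show "additive_map (\<lambda>p. swap_vars a b (diffop (Poly_Mapping.single m c) p))"
      by (rule additive_map_comp[OF additive_map_swap_vars additive_map_diffop])
    show "additive_map (\<lambda>p. diffop (swap_vars a b (Poly_Mapping.single m c)) (swap_vars a b p))"
      by (rule additive_map_comp[OF additive_map_diffop additive_map_swap_vars])
  qed (simp add: swap_vars_single diffop_single_single map_key_transpose_diff
      mono_falling_fact_map_key_transpose)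
  show ?thesis
  proof (rule additive_map_poly_mapping_eqI[of "\<lambda>g. swap_vars a b (diffop g p)"
        "\<lambda>g. diffop (swap_vars a b g) (swap_vars a b p)"])
    show "additive_map (\<lambda>g. swap_vars a b (diffop g p))"
      by (rule additive_map_comp[OF additive_map_swap_vars additive_map_diffop_left])
    show "additive_map (\<lambda>g. diffop (swap_vars a b g) (swap_vars a b p))"
      by (rule additive_map_comp[OF additive_map_diffop_left additive_map_swap_vars])
  qed (rule single)
qed

lemma swap_vars_esym_set:
  assumes "a \<in> T \<longleftrightarrow> b \<in> T"
  shows "swap_vars a b (esym_set r T) = esym_set r T"
proof -
  have "swap_vars a b (esym_set r T) = (\<Sum>U\<in>{U. U \<subseteq> T \<and> card U = r}. \<Prod>i\<in>transpose a b ` U. X i)"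
    by (simp add: esym_set_def swap_vars_sum swap_vars_prod swap_vars_X prod.reindex)
  also have "\<dots> = esym_set r T"
  proof -
    have "transpose a b ` U \<in> {U. U \<subseteq> T \<and> card U = r}" if "U \<in> {U. U \<subseteq> T \<and> card U = r}" for U
      using that assms image_mono[of U T "transpose a b"] transpose_image_eq[of a T b]
      by (simp add: card_image)
    then show ?thesis
      unfolding esym_set_def
      by (intro sum.reindex_bij_witness[where i = "(`) (transpose a b)" and j = "(`) (transpose a b)"])
        (simp_all add: image_image)
  qed
  finally show ?thesis .
qed

definition vandermonde_factor :: "nat \<Rightarrow> xpoly" where
  "vandermonde_factor m = (\<Prod>i\<in>{1..m}. X (Suc m) - X i)"

lemma Delta_0: "Delta 0 = 1"
  by (simp add: Delta_def)

lemma Delta_Suc: "Delta (Suc m) = Delta m * vandermonde_factor m"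
proof -
  have "Delta (Suc m) = (\<Prod>i\<in>{1..m}. \<Prod>j\<in>{i<..Suc m}. X j - X i)"
    unfolding Delta_def by (simp add: atLeastAtMostSuc_conv)
  also have "\<dots> = (\<Prod>i\<in>{1..m}. (X (Suc m) - X i) * (\<Prod>j\<in>{i<..m}. X j - X i))"
  proof (rule prod.cong[OF refl])
    fix i
    assume "i \<in> {1..m}"
    then have "{i<..Suc m} = insert (Suc m) {i<..m}"
      by auto
    then show "(\<Prod>j\<in>{i<..Suc m}. X j - X i) = (X (Suc m) - X i) * (\<Prod>j\<in>{i<..m}. X j - X i)"
      by simp
  qed
  also have "\<dots> = Delta m * vandermonde_factor m"
    by (simp add: prod.distrib Delta_def vandermonde_factor_def mult.commute)
  finally show ?thesis .
qed

lemma swap_vars_Delta_above: "k < a \<Longrightarrow> k < b \<Longrightarrow> swap_vars a b (Delta k) = Delta k"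
  unfolding Delta_def by (simp add: swap_vars_prod swap_vars_diff swap_vars_X)

lemma swap_vars_vandermonde_factor:
  assumes "a \<in> {1..m}" "b \<in> {1..m}"
  shows "swap_vars a b (vandermonde_factor m) = vandermonde_factor m"
proof -
  have image: "transpose a b ` {1..m} = {1..m}"
    using assms by (intro transpose_image_eq) simp
  have "swap_vars a b (vandermonde_factor m) = (\<Prod>i\<in>{1..m}. X (Suc m) - X (transpose a b i))"
    unfolding vandermonde_factor_def using assms
    by (simp add: swap_vars_prod swap_vars_diff swap_vars_X)
  also have "\<dots> = (\<Prod>i\<in>transpose a b ` {1..m}. X (Suc m) - X i)"
    by (simp only: prod.reindex[OF inj_on_transpose] comp_def)
  finally show ?thesis
    by (simp only: image vandermonde_factor_def)
qed

lemma swap_vars_Delta_adjacent: "swap_vars (Suc k) (Suc (Suc k)) (Delta (Suc (Suc k))) = - Delta (Suc (Suc k))"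
proof -
  let ?swap = "swap_vars (Suc k) (Suc (Suc k))"
  define W where "W = (\<Prod>i\<in>{1..k}. X (Suc (Suc k)) - X i)"
  have Delta: "Delta (Suc (Suc k)) =
      Delta k * vandermonde_factor k * ((X (Suc (Suc k)) - X (Suc k)) * W)"
    by (simp add: Delta_Suc vandermonde_factor_def W_def atLeastAtMostSuc_conv)
  have "?swap (vandermonde_factor k) = W" and "?swap W = vandermonde_factor k"
    unfolding vandermonde_factor_def W_def
    by (simp_all add: swap_vars_prod swap_vars_diff swap_vars_X)
  moreover have "?swap (X (Suc (Suc k)) - X (Suc k)) = - (X (Suc (Suc k)) - X (Suc k))"
    by (simp add: swap_vars_diff swap_vars_X)
  moreover have "?swap (Delta k) = Delta k"
    by (rule swap_vars_Delta_above) auto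
  ultimately show ?thesis
    unfolding Delta by (simp add: swap_vars_mult) (simp add: algebra_simps)
qed

lemma swap_vars_conjugate:
  assumes "a < m"
  shows "swap_vars a (Suc m) p = swap_vars m (Suc m) (swap_vars a m (swap_vars m (Suc m) p))"
proof (rule poly_mapping_eqI)
  fix mo :: "nat \<Rightarrow>\<^sub>0 nat"
  have "transpose m (Suc m) (transpose a m (transpose m (Suc m) k)) = transpose a (Suc m) k" for k
    using transpose_triple[of "Suc m" a m k] assms by (simp add: transpose_commute)
  then have "Poly_Mapping.map_key (transpose m (Suc m))
      (Poly_Mapping.map_key (transpose a m) (Poly_Mapping.map_key (transpose m (Suc m)) mo)) =
      Poly_Mapping.map_key (transpose a (Suc m)) mo"
    by (intro poly_mapping_eqI) (simp add: lookup_map_key_transpose)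
  then show "Poly_Mapping.lookup (swap_vars a (Suc m) p) mo =
      Poly_Mapping.lookup (swap_vars m (Suc m) (swap_vars a m (swap_vars m (Suc m) p))) mo"
    by (simp add: lookup_swap_vars)
qed

lemma swap_vars_Delta:
  assumes "1 \<le> a" "a < b" "b \<le> n"
  shows "swap_vars a b (Delta n) = - Delta n"
  using assms
proof (induction n arbitrary: a b)
  case (Suc m)
  have below: "swap_vars a' b' (Delta (Suc m)) = - Delta (Suc m)" if "1 \<le> a'" "a' < b'" "b' \<le> m" for a' b'
    using Suc.IH[OF that] swap_vars_vandermonde_factor[of a' m b'] that
    by (simp add: Delta_Suc swap_vars_mult)
  show ?case
  proof (cases "b \<le> m")
    case False
    then have b: "b = Suc m"
      using Suc.prems by simp
    then obtain k where m: "m = Suc k"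
      using Suc.prems by (cases m) auto
    have adjacent: "swap_vars m (Suc m) (Delta (Suc m)) = - Delta (Suc m)"
      unfolding m by (rule swap_vars_Delta_adjacent)
    show ?thesis
    proof (cases "a = m")
      case False
      then have "a < m"
        using Suc.prems b by simp
      then show ?thesis
        unfolding b swap_vars_conjugate[OF \<open>a < m\<close>]
        using below[of a m] Suc.prems by (simp add: adjacent swap_vars_uminus)
    qed (use adjacent b in simp)
  qed (use below Suc.prems in simp)
qed simp

definition total_degree :: "(nat \<Rightarrow>\<^sub>0 nat) \<Rightarrow> nat" where
  "total_degree m = (\<Sum>i\<in>Poly_Mapping.keys m. Poly_Mapping.lookup m i)"

lemma total_degree_eq_sum_superset:
  "finite K \<Longrightarrow> Poly_Mapping.keys m \<subseteq> K \<Longrightarrow> total_degree m = (\<Sum>i\<in>K. Poly_Mapping.lookup m i)"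
  unfolding total_degree_def by (rule sum.mono_neutral_left) (auto simp: in_keys_iff)

lemma total_degree_add: "total_degree (m + m') = total_degree m + total_degree m'"
  by (simp add: total_degree_eq_sum_superset[of "Poly_Mapping.keys m \<union> Poly_Mapping.keys m'"]
      keys_add lookup_add sum.distrib)

lemma total_degree_zero [simp]: "total_degree 0 = 0"
  by (simp add: total_degree_def)

lemma total_degree_single: "total_degree (Poly_Mapping.single i e) = e"
  by (simp add: total_degree_def)

definition homogeneous :: "nat \<Rightarrow> xpoly \<Rightarrow> bool" where
  "homogeneous D p \<longleftrightarrow> (\<forall>m\<in>Poly_Mapping.keys p. total_degree m = D)"

lemma homogeneous_zero: "homogeneous D 0"
  by (simp add: homogeneous_def)

lemma homogeneous_add: "homogeneous D p \<Longrightarrow> homogeneous D q \<Longrightarrow> homogeneous D (p + q)"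
  unfolding homogeneous_def using keys_add[of p q] by blast

lemma homogeneous_diff: "homogeneous D p \<Longrightarrow> homogeneous D q \<Longrightarrow> homogeneous D (p - q)"
  using homogeneous_add[of D p "- q"] by (simp add: homogeneous_def)

lemma homogeneous_sum: "(\<And>a. a \<in> A \<Longrightarrow> homogeneous D (f a)) \<Longrightarrow> homogeneous D (sum f A)"
  by (induction A rule: infinite_finite_induct) (auto simp: homogeneous_zero homogeneous_add)

lemma homogeneous_mult: "homogeneous D p \<Longrightarrow> homogeneous D' q \<Longrightarrow> homogeneous (D + D') (p * q)"
  unfolding homogeneous_def using keys_mult[of p q] by (auto simp: total_degree_add)

lemma homogeneous_one: "homogeneous 0 1"
  by (simp add: homogeneous_def)

lemma homogeneous_prod:
  "(\<And>i. i \<in> A \<Longrightarrow> homogeneous (d i) (f i)) \<Longrightarrow> homogeneous (\<Sum>i\<in>A. d i) (\<Prod>i\<in>A. f i)"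
  by (induction A rule: infinite_finite_induct) (simp_all add: homogeneous_one homogeneous_mult)

lemma homogeneous_X: "homogeneous 1 (X i)"
  by (simp add: homogeneous_def X_def total_degree_single)

lemma homogeneous_Delta: "homogeneous (\<Sum>i<n. i) (Delta n)"
proof (induction n)
  case 0
  then show ?case
    by (simp add: Delta_0 homogeneous_one)
next
  case (Suc m)
  have "homogeneous (\<Sum>i\<in>{1..m}. 1) (vandermonde_factor m)"
    unfolding vandermonde_factor_def by (intro homogeneous_prod homogeneous_diff homogeneous_X)
  then show ?case
    using homogeneous_mult[OF Suc] by (simp add: Delta_Suc)
qed

lemma homogeneous_esym_set: "homogeneous r (esym_set r T)"
  unfolding esym_set_def
proof (rule homogeneous_sum)
  fix U
  assume "U \<in> {U. U \<subseteq> T \<and> card U = r}"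
  moreover have "homogeneous (\<Sum>i\<in>U. 1) (\<Prod>i\<in>U. X i)"
    by (intro homogeneous_prod homogeneous_X)
  ultimately show "homogeneous r (\<Prod>i\<in>U. X i)"
    by simp
qed

lemma diffop_eq_sum_single:
  "diffop g p = (\<Sum>a\<in>Poly_Mapping.keys p. \<Sum>m\<in>Poly_Mapping.keys g.
     Poly_Mapping.single (a - m) (Poly_Mapping.lookup g m * Poly_Mapping.lookup p a * mono_falling_fact a m))"
proof -
  have "diffop g p = diffop (\<Sum>m\<in>Poly_Mapping.keys g. Poly_Mapping.single m (Poly_Mapping.lookup g m))
      (\<Sum>a\<in>Poly_Mapping.keys p. Poly_Mapping.single a (Poly_Mapping.lookup p a))"
    by (simp only: poly_mapping_eq_sum_single[symmetric])
  then show ?thesis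
    by (simp add: diffop_sum_left additive_map_sum[OF additive_map_diffop] diffop_single_single)
qed

lemma total_degree_keys_diffop:
  assumes "homogeneous D p" "homogeneous r g" "m \<in> Poly_Mapping.keys (diffop g p)"
  shows "total_degree m + r = D"
proof -
  define S where "S a mg = Poly_Mapping.single (a - mg)
    (Poly_Mapping.lookup g mg * Poly_Mapping.lookup p a * mono_falling_fact a mg)" for a mg
  have "Poly_Mapping.keys (diffop g p) \<subseteq>
      (\<Union>a\<in>Poly_Mapping.keys p. \<Union>mg\<in>Poly_Mapping.keys g. Poly_Mapping.keys (S a mg))"
    unfolding diffop_eq_sum_single S_def[symmetric]
    by (rule order_trans[OF keys_sum]) (intro UN_mono order.refl keys_sum)
  then obtain a mg where a: "a \<in> Poly_Mapping.keys p" and mg: "mg \<in> Poly_Mapping.keys g"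
    and "m \<in> Poly_Mapping.keys (S a mg)"
    using assms(3) by blast
  then have m: "m = a - mg" and "mono_falling_fact a mg \<noteq> 0"
    by (simp_all add: S_def split: if_splits)
  then have "m + mg = a"
    by (intro poly_mapping_eqI) (simp add: lookup_add lookup_minus mono_falling_fact_nonzero_le)
  then have "total_degree m + total_degree mg = total_degree a"
    using total_degree_add[of m mg] by simp
  then show ?thesis
    using assms(1,2) mg a by (simp add: homogeneous_def)
qed

lemma sum_lessThan_card_le_sum: "finite (A :: nat set) \<Longrightarrow> (\<Sum>i<card A. i) \<le> \<Sum>A"
proof (induction "card A" arbitrary: A)
  case (Suc c)
  define M where "M = Max A"
  have "A \<noteq> {}"
    using Suc.hyps(2) by auto
  then have M: "M \<in> A"
    using Suc.prems by (simp add: M_def)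
  then have c: "card (A - {M}) = c"
    using Suc.prems Suc.hyps(2) by simp
  have "A \<subseteq> {0..M}"
    using Suc.prems by (auto simp: M_def)
  then have "c \<le> M"
    using card_mono[of "{0..M}" A] Suc.hyps(2) by simp
  moreover have "(\<Sum>i<c. i) \<le> \<Sum>(A - {M})"
    using Suc.hyps(1)[of "A - {M}"] c Suc.prems by simp
  moreover have "\<Sum>A = M + \<Sum>(A - {M})"
    using Suc.prems M by (simp add: sum.remove)
  ultimately show ?case
    using Suc.hyps(2)[symmetric] by simp
qed simp

lemma total_degree_ge_if_distinct_exponents:
  assumes "\<And>a b. 1 \<le> a \<Longrightarrow> a < b \<Longrightarrow> b \<le> n \<Longrightarrow> Poly_Mapping.lookup m a \<noteq> Poly_Mapping.lookup m b"
  shows "(\<Sum>i<n. i) \<le> total_degree m"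
proof -
  have inj: "inj_on (Poly_Mapping.lookup m) {1..n}"
  proof (rule inj_onI)
    fix x y
    assume "x \<in> {1..n}" "y \<in> {1..n}" "Poly_Mapping.lookup m x = Poly_Mapping.lookup m y"
    then show "x = y"
      using assms[of x y] assms[of y x] by (cases x y rule: linorder_cases) auto
  qed
  have "(\<Sum>i<n. i) \<le> \<Sum>(Poly_Mapping.lookup m ` {1..n})"
    using sum_lessThan_card_le_sum[of "Poly_Mapping.lookup m ` {1..n}"] card_image[OF inj] by simp
  also have "\<dots> = (\<Sum>i\<in>{1..n}. Poly_Mapping.lookup m i)"
    by (rule sum.reindex[OF inj, unfolded comp_def])
  also have "\<dots> \<le> (\<Sum>i\<in>Poly_Mapping.keys m \<union> {1..n}. Poly_Mapping.lookup m i)"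
    by (rule sum_mono2) auto
  also have "\<dots> = total_degree m"
    by (rule total_degree_eq_sum_superset[symmetric]) auto
  finally show ?thesis .
qed

text \<open>
  A monomial of an antisymmetric polynomial has pairwise distinct exponents of \<open>x\<^sub>1, \<dots>, x\<^sub>n\<close>, hence
  degree at least \<open>\<Sum>i<n. i = deg \<Delta>\<^sub>n\<close>.\<close>

lemma antisymmetric_low_degree_eq_0:
  assumes antisym: "\<And>a b. 1 \<le> a \<Longrightarrow> a < b \<Longrightarrow> b \<le> n \<Longrightarrow> swap_vars a b q = - q"
    and degree: "\<And>m. m \<in> Poly_Mapping.keys q \<Longrightarrow> total_degree m < (\<Sum>i<n. i)"
  shows "q = 0"
proof (rule ccontr)
  assume "q \<noteq> 0"
  then obtain m where m: "m \<in> Poly_Mapping.keys q"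
    using keys_eq_empty[of q] by blast
  then obtain a b where ab: "1 \<le> a" "a < b" "b \<le> n" "Poly_Mapping.lookup m a = Poly_Mapping.lookup m b"
    using degree total_degree_ge_if_distinct_exponents[of n m] by (meson not_le)
  then have "Poly_Mapping.map_key (transpose a b) m = m"
    by (intro poly_mapping_eqI) (simp add: lookup_map_key_transpose transpose_def)
  then have "Poly_Mapping.lookup q m = - Poly_Mapping.lookup q m"
    using lookup_swap_vars[of a b q m] antisym[OF ab(1-3)] by simp
  then show False
    using m by (simp add: in_keys_iff)
qed

lemma harmonic_Delta: "harmonic {1..n} (Delta n)"
  unfolding harmonic_def
proof (intro allI impI)
  fix r :: nat
  assume "1 \<le> r"
  show "diffop (esym_set r {1..n}) (Delta n) = 0"
  proof (rule antisymmetric_low_degree_eq_0)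
    fix a b
    assume "1 \<le> a" "a < b" "b \<le> n"
    then show "swap_vars a b (diffop (esym_set r {1..n}) (Delta n)) = - diffop (esym_set r {1..n}) (Delta n)"
      by (simp add: swap_vars_diffop swap_vars_esym_set swap_vars_Delta diffop_uminus_right)
  next
    fix m
    assume "m \<in> Poly_Mapping.keys (diffop (esym_set r {1..n}) (Delta n))"
    then show "total_degree m < (\<Sum>i<n. i)"
      using total_degree_keys_diffop[OF homogeneous_Delta homogeneous_esym_set] \<open>1 \<le> r\<close> by fastforce
  qed
qed

section \<open>Operators on superspace\<close>

lemma additive_map_sdiffop: "additive_map (sdiffop g)"
  by (rule additive_mapI) (simp add: sdiffop_def fun_eq_iff additive_map_add[OF additive_map_diffop])

lemma sdiffop_mult: "sdiffop (f * g) \<omega> = sdiffop f (sdiffop g \<omega>)"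
  by (simp add: sdiffop_def diffop_mult)

lemma sdiffop_of_x: "sdiffop g (of_x p) = of_x (diffop g p)"
  by (simp add: sdiffop_def of_x_def fun_eq_iff)

lemma additive_map_commute_theta_mul:
  "additive_map f \<Longrightarrow> f (theta_mul l \<omega> S) = theta_mul l (\<lambda>T. f (\<omega> T)) S"
  by (simp add: theta_mul_def additive_map_minus_one_power additive_map_zero)

lemma theta_mul_add: "theta_mul l (\<lambda>T. \<omega> T + \<omega>' T) S = theta_mul l \<omega> S + theta_mul l \<omega>' S"
  by (simp add: theta_mul_def distrib_left)

lemma theta_mul_sum: "theta_mul l (\<lambda>T. \<Sum>a\<in>A. \<omega> a T) S = (\<Sum>a\<in>A. theta_mul l (\<omega> a) S)"
  by (simp add: theta_mul_def sum_distrib_left)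

definition theta_diffop :: "nat \<Rightarrow> (nat \<Rightarrow> xpoly) \<Rightarrow> spoly \<Rightarrow> spoly" where
  "theta_diffop n g \<omega> = (\<lambda>S. \<Sum>l=1..n. theta_mul l (\<lambda>T. diffop (g l) (\<omega> T)) S)"

lemma dop_eq_theta_diffop: "dop n i = theta_diffop n (\<lambda>l. X l ^ i)"
  by (simp add: fun_eq_iff dop_def theta_diffop_def diffop_X_power)

lemma additive_map_theta_diffop: "additive_map (theta_diffop n g)"
  by (rule additive_mapI)
    (simp add: theta_diffop_def fun_eq_iff additive_map_add[OF additive_map_diffop] theta_mul_add
      sum.distrib)

lemma theta_diffop_sum:
  "theta_diffop n (\<lambda>l. \<Sum>a\<in>A. g a l) \<omega> = (\<Sum>a\<in>A. theta_diffop n (g a) \<omega>)"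
  by (simp add: theta_diffop_def fun_eq_iff diffop_sum_left theta_mul_sum sum_apply sum.swap[of _ A])

lemma sdiffop_theta_diffop: "sdiffop h (theta_diffop n g \<omega>) = theta_diffop n (\<lambda>l. h * g l) \<omega>"
  by (simp add: sdiffop_def theta_diffop_def fun_eq_iff diffop_mult
      additive_map_sum[OF additive_map_diffop] additive_map_commute_theta_mul[OF additive_map_diffop])

lemma theta_diffop_sdiffop: "theta_diffop n g (sdiffop h \<omega>) = theta_diffop n (\<lambda>l. g l * h) \<omega>"
  by (simp add: sdiffop_def theta_diffop_def diffop_mult)

lemma sdiffop_theta_diffop_commute: "sdiffop h (theta_diffop n g \<omega>) = theta_diffop n g (sdiffop h \<omega>)"
  by (simp add: sdiffop_theta_diffop theta_diffop_sdiffop mult.commute)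

lemma theta_diffop_of_x_eq_0:
  assumes "\<And>l. l \<in> {1..n} \<Longrightarrow> diffop (g l) p = 0"
  shows "theta_diffop n g (of_x p) = 0"
proof -
  have "theta_mul l (\<lambda>T. diffop (g l) (of_x p T)) S = 0" if "l \<in> {1..n}" for l S
    using assms[OF that] by (simp add: theta_mul_def of_x_def)
  then show ?thesis
    by (simp add: theta_diffop_def fun_eq_iff)
qed

lemma harmonic_theta_diffop: "(\<And>T. harmonic A (\<omega> T)) \<Longrightarrow> harmonic A (theta_diffop n g \<omega> S)"
  by (simp add: theta_diffop_def theta_mul_def harmonic_sum harmonic_minus_one_power harmonic_diffop
      harmonic_zero)

text \<open>The sign behind \<open>\<theta>\<^sub>l \<theta>\<^sub>l\<^sub>' = - \<theta>\<^sub>l\<^sub>' \<theta>\<^sub>l\<close>.\<close>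

lemma minus_one_power_card_less_swap:
  fixes S :: "nat set"
  assumes "l \<in> S" "l' \<in> S" "l \<noteq> l'"
  shows "(-1::'a::ring_1) ^ (card {s\<in>S. s < l} + card {s\<in>S - {l}. s < l'}) =
    - ((-1) ^ (card {s\<in>S. s < l'} + card {s\<in>S - {l'}. s < l}))"
proof -
  have less: "(-1::'a) ^ (card {s\<in>S. s < x} + card {s\<in>S - {x}. s < y}) =
      - ((-1) ^ (card {s\<in>S. s < y} + card {s\<in>S - {y}. s < x}))"
    if "x \<in> S" "y \<in> S" "x < y" for x y
  proof -
    have "finite {s\<in>S - {x}. s < y}"
      by (rule finite_subset[of _ "{..<y}"]) auto
    moreover have "{s\<in>S. s < y} = insert x {s\<in>S - {x}. s < y}"
      using that by auto
    ultimately have "card {s\<in>S. s < y} = Suc (card {s\<in>S - {x}. s < y})"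
      by (simp only: card_insert_disjoint[of _ x]) simp
    moreover have "{s\<in>S - {y}. s < x} = {s\<in>S. s < x}"
      using that by auto
    ultimately show ?thesis
      by (simp add: add.commute)
  qed
  show ?thesis
  proof (cases "l < l'")
    case False
    then have "l' < l"
      using assms(3) by linarith
    from less[OF assms(2,1) this] show ?thesis
      by (simp add: eq_neg_iff_add_eq_0 add.commute)
  qed (rule less[OF assms(1,2)])
qed

lemma sum_sum_antisym_eq_0:
  fixes G :: "'c \<Rightarrow> 'c \<Rightarrow> 'a \<Rightarrow>\<^sub>0 'b::linordered_idom"
  assumes "\<And>l l'. G l l' = - G l' l"
  shows "(\<Sum>l\<in>A. \<Sum>l'\<in>A. G l l') = 0"
proof -
  have "(\<Sum>l\<in>A. \<Sum>l'\<in>A. G l l') = (\<Sum>l'\<in>A. \<Sum>l\<in>A. - G l' l)"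
    by (subst sum.swap) (intro sum.cong refl assms)
  then have "(\<Sum>l\<in>A. \<Sum>l'\<in>A. G l l') = - (\<Sum>l\<in>A. \<Sum>l'\<in>A. G l l')"
    by (simp add: sum_negf)
  then show ?thesis
    by (simp add: poly_mapping_eq_iff fun_eq_iff)
qed

text \<open>The contribution of \<open>\<theta>\<^sub>l \<partial>\<^bsub>g\<^sub>l\<^esub> \<theta>\<^sub>l\<^sub>' \<partial>\<^bsub>g\<^sub>l\<^sub>'\<^esub> \<omega>\<close> to the coefficient of \<open>\<theta>\<^sub>S\<close>.\<close>

definition theta_pair_term :: "(nat \<Rightarrow> xpoly) \<Rightarrow> spoly \<Rightarrow> nat set \<Rightarrow> nat \<Rightarrow> nat \<Rightarrow> xpoly" where
  "theta_pair_term g \<omega> S l l' = (if l \<in> S \<and> l' \<in> S \<and> l \<noteq> l' then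
      (-1) ^ (card {s\<in>S. s < l} + card {s\<in>S - {l}. s < l'}) *
        diffop (g l) (diffop (g l') (\<omega> (S - {l} - {l'}))) else 0)"

lemma theta_mul_theta_diffop:
  "theta_mul l (\<lambda>T. diffop (g l) (theta_diffop n g \<omega> T)) S = (\<Sum>l'=1..n. theta_pair_term g \<omega> S l l')"
proof (cases "l \<in> S")
  case True
  have "theta_mul l (\<lambda>T. diffop (g l) (theta_diffop n g \<omega> T)) S =
      (\<Sum>l'=1..n. (-1) ^ card {s\<in>S. s < l} *
        diffop (g l) (theta_mul l' (\<lambda>T. diffop (g l') (\<omega> T)) (S - {l})))"
    using True
    by (simp add: theta_mul_def theta_diffop_def sum_distrib_left additive_map_sum[OF additive_map_diffop])
  also have "\<dots> = (\<Sum>l'=1..n. theta_pair_term g \<omega> S l l')"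
  proof (rule sum.cong[OF refl])
    fix l'
    show "(-1) ^ card {s\<in>S. s < l} *
        diffop (g l) (theta_mul l' (\<lambda>T. diffop (g l') (\<omega> T)) (S - {l})) = theta_pair_term g \<omega> S l l'"
      using True
      by (simp add: theta_pair_term_def theta_mul_def power_add mult.assoc
          additive_map_minus_one_power[OF additive_map_diffop])
  qed
  finally show ?thesis .
qed (simp add: theta_mul_def theta_pair_term_def)

lemma theta_pair_term_antisym: "theta_pair_term g \<omega> S l l' = - theta_pair_term g \<omega> S l' l"
proof (cases "l \<in> S \<and> l' \<in> S \<and> l \<noteq> l'")
  case True
  then have swapped: "l' \<in> S \<and> l \<in> S \<and> l' \<noteq> l"
    by auto
  have "S - {l} - {l'} = S - {l'} - {l}"
    by auto
  then have "diffop (g l) (diffop (g l') (\<omega> (S - {l} - {l'}))) =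
      diffop (g l') (diffop (g l) (\<omega> (S - {l'} - {l})))"
    by (simp only: diffop_commute[of "g l"])
  moreover have "(-1::xpoly) ^ (card {s\<in>S. s < l} + card {s\<in>S - {l}. s < l'}) =
      - ((-1) ^ (card {s\<in>S. s < l'} + card {s\<in>S - {l'}. s < l}))"
    using True by (intro minus_one_power_card_less_swap) auto
  ultimately show ?thesis
    unfolding theta_pair_term_def if_P[OF True] if_P[OF swapped] by (simp only: minus_mult_left)
next
  case False
  then have swapped: "\<not> (l' \<in> S \<and> l \<in> S \<and> l' \<noteq> l)"
    by auto
  show ?thesis
    unfolding theta_pair_term_def if_not_P[OF False] if_not_P[OF swapped] by simp
qed

lemma theta_diffop_theta_diffop: "theta_diffop n g (theta_diffop n g \<omega>) = 0"
proof (rule ext)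
  fix S
  have "(\<Sum>l=1..n. \<Sum>l'=1..n. theta_pair_term g \<omega> S l l') = 0"
    by (rule sum_sum_antisym_eq_0) (rule theta_pair_term_antisym)
  then show "theta_diffop n g (theta_diffop n g \<omega>) S = 0 S"
    unfolding theta_diffop_def[of n g "theta_diffop n g \<omega>"] theta_mul_theta_diffop by simp
qed

section \<open>Interlacing sums\<close>

text \<open>The operator \<open>G\<^sub>c\<close> of the proof sketch.\<close>

definition theta_complete_hom :: "nat \<Rightarrow> nat \<Rightarrow> spoly \<Rightarrow> spoly" where
  "theta_complete_hom n c = theta_diffop n (complete_hom2 c n)"

lemma theta_complete_hom_eq_sum:
  "theta_complete_hom n c \<omega> = (\<Sum>a\<le>c. sdiffop (X n ^ (c - a)) (dop n a \<omega>))"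
proof -
  have "complete_hom2 c n = (\<lambda>l. \<Sum>a\<le>c. X n ^ (c - a) * X l ^ a)"
    by (simp add: fun_eq_iff complete_hom2_def)
  then show ?thesis
    by (simp add: theta_complete_hom_def theta_diffop_sum sdiffop_theta_diffop dop_eq_theta_diffop)
qed

lemma theta_complete_hom_square: "theta_complete_hom n c (theta_complete_hom n c \<omega>) = 0"
  unfolding theta_complete_hom_def by (rule theta_diffop_theta_diffop)

lemma sdiffop_theta_complete_hom_commute:
  "sdiffop h (theta_complete_hom n c \<omega>) = theta_complete_hom n c (sdiffop h \<omega>)"
  unfolding theta_complete_hom_def by (rule sdiffop_theta_diffop_commute)

lemma additive_map_theta_complete_hom: "additive_map (theta_complete_hom n c)"
  unfolding theta_complete_hom_def by (rule additive_map_theta_diffop)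

lemma diffop_X_power_Delta:
  assumes "1 \<le> n"
  shows "diffop (X n ^ n) (Delta n) = 0"
proof -
  have "insert n {1..n - 1} = {1..n}" and "Suc (card {1..n - 1}) = n"
    using assms by auto
  then show ?thesis
    using diffop_X_power_harmonic_eq_0[of "{1..n - 1}" n "Delta n"] harmonic_Delta[of n] by simp
qed

lemma diffop_complete_hom2_Delta:
  assumes "2 \<le> n" "l \<in> {1..n - 1}"
  shows "diffop (complete_hom2 (n - 1) n l) (Delta n) = 0"
proof -
  let ?R = "{1..n} - {l, n}"
  have "insert l (insert n ?R) = {1..n}" and "Suc (card ?R) = n - 1" and "l \<noteq> n"
    using assms by (auto simp: card_Diff_subset)
  then show ?thesis
    using assms diffop_complete_hom2_harmonic_eq_0[of ?R l n "Delta n"] harmonic_Delta[of n] by simp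
qed

lemma of_x_0 [simp]: "of_x 0 = 0"
  by (simp add: of_x_def fun_eq_iff)

definition chain_invariant :: "nat \<Rightarrow> nat \<Rightarrow> spoly \<Rightarrow> bool" where
  "chain_invariant n b \<omega> \<longleftrightarrow>
     sdiffop (X n ^ b) \<omega> = 0 \<and> sdiffop (X n) (theta_complete_hom n (b - 1) \<omega>) = 0"

lemma chain_invariant_Delta:
  assumes "2 \<le> n"
  shows "chain_invariant n n (of_x (Delta n))"
proof -
  have "diffop (X n * complete_hom2 (n - 1) n l) (Delta n) = 0" if "l \<in> {1..n}" for l
  proof (cases "l = n")
    case True
    have "X n * complete_hom2 (n - 1) n n = (\<Sum>a\<le>n - 1. X n ^ n)"
      unfolding complete_hom2_def sum_distrib_left
    proof (rule sum.cong[OF refl])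
      fix a
      assume "a \<in> {..n - 1}"
      then have "Suc (n - 1 - a + a) = n"
        using assms by simp
      then show "X n * (X n ^ (n - 1 - a) * X n ^ a) = X n ^ n"
        by (metis power_Suc power_add mult.assoc)
    qed
    then show ?thesis
      using True assms by (simp add: diffop_mult diffop_X_power_Delta)
  next
    case False
    then have "l \<in> {1..n - 1}"
      using that by auto
    then show ?thesis
      using diffop_complete_hom2_Delta[OF assms] by (simp add: diffop_mult)
  qed
  then have "theta_diffop n (\<lambda>l. X n * complete_hom2 (n - 1) n l) (of_x (Delta n)) = 0"
    by (rule theta_diffop_of_x_eq_0)
  then show ?thesis
    using assms
    by (simp add: chain_invariant_def sdiffop_of_x diffop_X_power_Delta theta_complete_hom_def
        sdiffop_theta_diffop)
qed

definition dop_range_sum :: "nat \<Rightarrow> nat \<Rightarrow> nat \<Rightarrow> spoly \<Rightarrow> spoly" where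
  "dop_range_sum n lo up \<omega> = (\<Sum>j\<in>{lo..<up}. sdiffop (X n ^ (up - 1 - j)) (dop n j \<omega>))"

lemma dop_range_sum_eq:
  assumes "1 \<le> lo" "lo \<le> up"
  shows "dop_range_sum n lo up \<omega> =
    theta_complete_hom n (up - 1) \<omega> - sdiffop (X n ^ (up - lo)) (theta_complete_hom n (lo - 1) \<omega>)"
proof -
  have split: "{..up - 1} = {..lo - 1} \<union> {lo..<up}"
    using assms by auto
  have "sdiffop (X n ^ (up - lo)) (theta_complete_hom n (lo - 1) \<omega>) =
      (\<Sum>a\<le>lo - 1. sdiffop (X n ^ (up - 1 - a)) (dop n a \<omega>))"
  proof -
    have "X n ^ (up - lo) * X n ^ (lo - 1 - a) = X n ^ (up - 1 - a)" if "a \<le> lo - 1" for a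
      using that assms by (simp flip: power_add)
    then show ?thesis
      by (simp add: theta_complete_hom_eq_sum additive_map_sum[OF additive_map_sdiffop]
          flip: sdiffop_mult)
  qed
  moreover have "theta_complete_hom n (up - 1) \<omega> =
      (\<Sum>a\<le>lo - 1. sdiffop (X n ^ (up - 1 - a)) (dop n a \<omega>)) + dop_range_sum n lo up \<omega>"
    unfolding theta_complete_hom_eq_sum dop_range_sum_def split
    by (rule sum.union_disjoint) (use assms in auto)
  ultimately show ?thesis
    by simp
qed

lemma chain_invariant_dop_range_sum:
  assumes inv: "chain_invariant n up \<omega>" and "1 \<le> lo" "lo \<le> up"
  shows "chain_invariant n lo (dop_range_sum n lo up \<omega>)"
proof -
  let ?G = "theta_complete_hom n"
  have G_up: "sdiffop (X n) (?G (up - 1) \<omega>) = 0" and D_up: "sdiffop (X n ^ up) \<omega> = 0"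
    using inv by (simp_all add: chain_invariant_def)
  have G_zero: "?G c 0 = 0" and D_zero: "sdiffop h 0 = 0" for c h
    by (simp_all add: additive_map_zero[OF additive_map_theta_complete_hom]
        additive_map_zero[OF additive_map_sdiffop])
  obtain l where lo: "lo = Suc l"
    using \<open>1 \<le> lo\<close> by (cases lo) auto
  have "sdiffop (X n ^ lo) (?G (up - 1) \<omega>) = sdiffop (X n ^ l) (sdiffop (X n) (?G (up - 1) \<omega>))"
    unfolding lo by (simp only: power_Suc2 sdiffop_mult)
  then have "sdiffop (X n ^ lo) (?G (up - 1) \<omega>) = 0"
    using G_up D_zero by simp
  moreover have "sdiffop (X n ^ lo) (sdiffop (X n ^ (up - lo)) (?G (lo - 1) \<omega>)) =
      ?G (lo - 1) (sdiffop (X n ^ up) \<omega>)"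
    using \<open>lo \<le> up\<close>
    by (simp only: sdiffop_theta_complete_hom_commute flip: sdiffop_mult power_add) simp
  moreover have "sdiffop (X n) (?G (lo - 1) (?G (up - 1) \<omega>)) = ?G (lo - 1) (sdiffop (X n) (?G (up - 1) \<omega>))"
    by (rule sdiffop_theta_complete_hom_commute)
  moreover have "?G (lo - 1) (sdiffop (X n ^ (up - lo)) (?G (lo - 1) \<omega>)) =
      sdiffop (X n ^ (up - lo)) (?G (lo - 1) (?G (lo - 1) \<omega>))"
    by (rule sdiffop_theta_complete_hom_commute[symmetric])
  ultimately show ?thesis
    using assms(2,3) G_up D_up G_zero D_zero
    by (simp add: chain_invariant_def dop_range_sum_eq theta_complete_hom_square
        additive_map_diff[OF additive_map_sdiffop] additive_map_diff[OF additive_map_theta_complete_hom])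
qed

lemma chain_invariant_foldr_dop_range_sum:
  assumes "mono_on {1..Suc k} b" "1 \<le> b 1" "chain_invariant n (b (Suc k)) \<omega>"
  shows "chain_invariant n (b 1) (foldr (\<lambda>t. dop_range_sum n (b t) (b (Suc t))) [1..<Suc k] \<omega>)"
  using assms
proof (induction k arbitrary: \<omega>)
  case (Suc k)
  have "b 1 \<le> b (Suc k)" and "b (Suc k) \<le> b (Suc (Suc k))"
    using Suc.prems(1) by (auto intro: mono_onD)
  then have "chain_invariant n (b (Suc k)) (dop_range_sum n (b (Suc k)) (b (Suc (Suc k))) \<omega>)"
    using Suc.prems by (intro chain_invariant_dop_range_sum) auto
  moreover have "mono_on {1..Suc k} b"
    using Suc.prems(1) by (rule mono_on_subset) auto
  ultimately show ?case
    using Suc.IH[of "dop_range_sum n (b (Suc k)) (b (Suc (Suc k))) \<omega>"] Suc.prems(2) by simp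
qed simp

lemma sdiffop_one: "sdiffop 1 \<omega> = \<omega>"
  by (simp add: sdiffop_def diffop_one)

lemma additive_map_dop: "additive_map (dop n i)"
  unfolding dop_eq_theta_diffop by (rule additive_map_theta_diffop)

lemma sdiffop_dop_commute: "sdiffop h (dop n i \<omega>) = dop n i (sdiffop h \<omega>)"
  unfolding dop_eq_theta_diffop by (rule sdiffop_theta_diffop_commute)

lemma dops_Suc: "dops n j (Suc k) \<omega> = dops n j k (dop n (j (Suc k)) \<omega>)"
  by (simp add: dops_def)

lemma dops_cong: "(\<And>t. t \<in> {1..k} \<Longrightarrow> j t = j' t) \<Longrightarrow> dops n j k \<omega> = dops n j' k \<omega>"
  unfolding dops_def by (rule foldr_cong) auto

lemma additive_map_dops: "additive_map (dops n j k)"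
  unfolding dops_def[abs_def] by (intro additive_map_foldr additive_map_dop)

lemma sdiffop_dops_commute: "sdiffop h (dops n j k \<omega>) = dops n j k (sdiffop h \<omega>)"
proof -
  have "sdiffop h (foldr (\<lambda>t. dop n (j t)) ts \<omega>) = foldr (\<lambda>t. dop n (j t)) ts (sdiffop h \<omega>)" for ts
    by (induction ts) (simp_all add: sdiffop_dop_commute)
  then show ?thesis
    by (simp add: dops_def)
qed

lemma harmonic_dops: "(\<And>T. harmonic A (\<omega> T)) \<Longrightarrow> harmonic A (dops n j k \<omega> S)"
proof -
  assume "\<And>T. harmonic A (\<omega> T)"
  then have "harmonic A (foldr (\<lambda>t. dop n (j t)) ts \<omega> S)" for ts S
    by (induction ts arbitrary: S) (simp_all add: dop_eq_theta_diffop harmonic_theta_diffop)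
  then show ?thesis
    by (simp add: dops_def)
qed

definition interlacing_box :: "nat \<Rightarrow> (nat \<Rightarrow> nat) \<Rightarrow> (nat \<Rightarrow> nat) set" where
  "interlacing_box k b =
     {j. (\<forall>t\<in>{1..k}. b t \<le> j t \<and> j t < b (Suc t)) \<and> (\<forall>t. t \<notin> {1..k} \<longrightarrow> j t = 0)}"

lemma interlacing_box_0: "interlacing_box 0 b = {\<lambda>_. 0}"
  by (auto simp: interlacing_box_def)

lemma sum_interlacing_box:
  "(\<Sum>j\<in>interlacing_box k b. sdiffop (X n ^ (\<Sum>t=1..k. b (Suc t) - 1 - j t)) (dops n j k \<omega>)) =
     foldr (\<lambda>t. dop_range_sum n (b t) (b (Suc t))) [1..<Suc k] \<omega>"
proof (induction k arbitrary: \<omega>)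
  case 0
  then show ?case
    by (simp add: interlacing_box_0 dops_def sdiffop_one)
next
  case (Suc k)
  let ?I = "{b (Suc k)..<b (Suc (Suc k))}"
  let ?A = "\<lambda>j. \<Sum>t=1..k. b (Suc t) - 1 - j t"
  let ?F = "\<lambda>j. sdiffop (X n ^ (\<Sum>t=1..Suc k. b (Suc t) - 1 - j t)) (dops n j (Suc k) \<omega>)"
  have F: "?F (j(Suc k := x)) =
      sdiffop (X n ^ ?A j) (dops n j k (sdiffop (X n ^ (b (Suc (Suc k)) - 1 - x)) (dop n x \<omega>)))" for j x
  proof -
    have "(\<Sum>t=1..Suc k. b (Suc t) - 1 - (j(Suc k := x)) t) = ?A j + (b (Suc (Suc k)) - 1 - x)"
      by (simp add: atLeastAtMostSuc_conv)
    moreover have "dops n (j(Suc k := x)) (Suc k) \<omega> = dops n j k (dop n x \<omega>)"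
      by (simp add: dops_Suc) (rule dops_cong, simp)
    ultimately show ?thesis
      by (simp add: power_add sdiffop_mult sdiffop_dops_commute)
  qed
  have "(\<Sum>j\<in>interlacing_box (Suc k) b. ?F j) = (\<Sum>(j, x)\<in>interlacing_box k b \<times> ?I. ?F (j(Suc k := x)))"
    by (rule sum.reindex_bij_witness[where j = "\<lambda>j. (j(Suc k := 0), j (Suc k))" and i = "\<lambda>(j, x). j(Suc k := x)"])
      (auto simp: interlacing_box_def fun_eq_iff)
  also have "\<dots> = (\<Sum>j\<in>interlacing_box k b. \<Sum>x\<in>?I. ?F (j(Suc k := x)))"
    by (rule sum.cartesian_product[symmetric])
  also have "\<dots> = (\<Sum>j\<in>interlacing_box k b. sdiffop (X n ^ ?A j)
      (dops n j k (dop_range_sum n (b (Suc k)) (b (Suc (Suc k))) \<omega>)))"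
    by (simp only: F dop_range_sum_def
        additive_map_sum[OF additive_map_comp[OF additive_map_sdiffop additive_map_dops]])
  also have "\<dots> = foldr (\<lambda>t. dop_range_sum n (b t) (b (Suc t))) [1..<Suc (Suc k)] \<omega>"
    unfolding Suc.IH by (simp del: upt_Suc add: upt_Suc_append)
  finally show ?case .
qed

lemma sum_gaps_telescope:
  fixes f :: "nat \<Rightarrow> nat"
  assumes "\<And>t. t \<in> {1..k} \<Longrightarrow> f t < f (Suc t)"
  shows "(\<Sum>t=1..k. f (Suc t) - 1 - f t) + k + f 1 = f (Suc k)"
  using assms
proof (induction k)
  case (Suc k)
  then have "(\<Sum>t=1..k. f (Suc t) - 1 - f t) + k + f 1 = f (Suc k)" and "f (Suc k) < f (Suc (Suc k))"
    by auto
  then show ?case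
    by simp
qed simp

lemma interlacing_box_degree:
  assumes "strict_mono_on {1..Suc k} b" "j \<in> interlacing_box k b"
  shows "(\<Sum>t=1..k. j t - b t) + (b 1 + (\<Sum>t=1..k. b (Suc t) - 1 - j t)) + k = b (Suc k)"
proof -
  have "(\<Sum>t=1..k. j t - b t) + (\<Sum>t=1..k. b (Suc t) - 1 - j t) = (\<Sum>t=1..k. b (Suc t) - 1 - b t)"
    unfolding sum.distrib[symmetric]
  proof (rule sum.cong[OF refl])
    fix t
    assume "t \<in> {1..k}"
    then have "b t \<le> j t" "j t < b (Suc t)"
      using assms(2) by (auto simp: interlacing_box_def)
    then show "j t - b t + (b (Suc t) - 1 - j t) = b (Suc t) - 1 - b t"
      by simp
  qed
  moreover have "(\<Sum>t=1..k. b (Suc t) - 1 - b t) + k + b 1 = b (Suc k)"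
    using assms(1) by (intro sum_gaps_telescope) (auto intro: strict_mono_onD)
  ultimately show ?thesis
    by simp
qed

lemma sum_interlacing_box_Delta_eq_0:
  assumes "2 \<le> n" "mono_on {1..Suc k} b" "1 \<le> b 1" "b (Suc k) = n"
  shows "(\<Sum>j\<in>interlacing_box k b.
      sdiffop (X n ^ (b 1 + (\<Sum>t=1..k. b (Suc t) - 1 - j t))) (dops n j k (of_x (Delta n)))) = 0"
proof -
  let ?\<Phi> = "foldr (\<lambda>t. dop_range_sum n (b t) (b (Suc t))) [1..<Suc k] (of_x (Delta n))"
  have "chain_invariant n (b 1) ?\<Phi>"
    using assms chain_invariant_Delta[OF assms(1)] by (intro chain_invariant_foldr_dop_range_sum) auto
  then have "sdiffop (X n ^ b 1) ?\<Phi> = 0"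
    by (simp add: chain_invariant_def)
  moreover have "(\<Sum>j\<in>interlacing_box k b.
      sdiffop (X n ^ (b 1 + (\<Sum>t=1..k. b (Suc t) - 1 - j t))) (dops n j k (of_x (Delta n)))) =
      sdiffop (X n ^ b 1) (\<Sum>j\<in>interlacing_box k b.
        sdiffop (X n ^ (\<Sum>t=1..k. b (Suc t) - 1 - j t)) (dops n j k (of_x (Delta n))))"
    by (simp only: power_add sdiffop_mult additive_map_sum[OF additive_map_sdiffop])
  ultimately show ?thesis
    by (simp only: sum_interlacing_box)
qed

lemma signed_esym_dops_Delta:
  assumes "1 \<le> n" "d + a + k = n"
  shows "(-1) ^ d * sdiffop (esym (int n - int k - int d) (n - 1)) (dops n j k (of_x (Delta n))) S =
    (-1) ^ (n - k) * sdiffop (X n ^ a) (dops n j k (of_x (Delta n))) S"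
proof -
  have "harmonic {1..n} (of_x (Delta n) T)" for T
    using harmonic_Delta[of n] by (simp add: of_x_def harmonic_zero)
  then have "harmonic {1..n} (dops n j k (of_x (Delta n)) S)"
    by (rule harmonic_dops)
  moreover have "{1..n} = insert n {1..n - 1}"
    using assms(1) by auto
  ultimately have "sdiffop (esym_set a {1..n - 1}) (dops n j k (of_x (Delta n))) S =
      (-1) ^ a * sdiffop (X n ^ a) (dops n j k (of_x (Delta n))) S"
    unfolding sdiffop_def by (intro diffop_esym_set_harmonic) auto
  moreover have "int n - int k - int d = int a" and "d + a = n - k"
    using assms(2) by linarith+
  ultimately show ?thesis
    by (simp add: esym_eq_esym_set power_add[symmetric] mult.assoc[symmetric])
qed

lemma interlacing_eq_interlacing_box:
  assumes "1 \<le> k"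
  shows "interlacing n k i = interlacing_box k (\<lambda>t. if t \<le> k then i t else n)"
  using assms by (auto simp: interlacing_def interlacing_box_def Suc_le_eq)

lemma strict_mono_on_extend:
  fixes i :: "nat \<Rightarrow> 'a::linorder"
  assumes "strict_mono_on {1..k} i" "1 \<le> k" "i k < n"
  shows "strict_mono_on {1..Suc k} (\<lambda>t. if t \<le> k then i t else n)"
proof (rule strict_mono_onI)
  fix r s :: nat
  assume "r \<in> {1..Suc k}" "s \<in> {1..Suc k}" "r < s"
  moreover have "i r \<le> i k" if "r \<in> {1..k}"
    using strict_mono_on_leD[OF assms(1) that, of k] that by simp
  ultimately show "(if r \<le> k then i r else n) < (if s \<le> k then i s else n)"
    using assms strict_mono_onD[OF assms(1), of r s] by auto
qed

theorem theorem1p9: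
  fixes n k :: nat and i :: "nat \<Rightarrow> nat"
  assumes "n \<ge> 2" and "k \<ge> 1"
    and "strict_mono_on {1..k} i" and "1 \<le> i 1" and "i k \<le> n - 1"
  shows "\<forall>S. (\<Sum>j\<in>interlacing n k i.
            (-1) ^ (\<Sum>t=1..k. j t - i t) *
            sdiffop (esym (int n - int k - int (\<Sum>t=1..k. j t - i t)) (n - 1))
                    (dops n j k (of_x (Delta n))) S) = 0"
proof -
  define b where "b t = (if t \<le> k then i t else n)" for t
  let ?A = "\<lambda>j. b 1 + (\<Sum>t=1..k. b (Suc t) - 1 - j t)"
  have b: "strict_mono_on {1..Suc k} b" "1 \<le> b 1" "b (Suc k) = n"
    using assms strict_mono_on_extend[OF assms(3,2), of n] by (simp_all add: b_def[abs_def])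
  have degree: "(\<Sum>t=1..k. j t - i t) + ?A j + k = n" if "j \<in> interlacing_box k b" for j
    using interlacing_box_degree[OF b(1) that] b(3) by (simp add: b_def)
  have "(\<Sum>j\<in>interlacing n k i. (-1) ^ (\<Sum>t=1..k. j t - i t) *
      sdiffop (esym (int n - int k - int (\<Sum>t=1..k. j t - i t)) (n - 1)) (dops n j k (of_x (Delta n))) S) =
      (-1) ^ (n - k) * (\<Sum>j\<in>interlacing_box k b. sdiffop (X n ^ ?A j) (dops n j k (of_x (Delta n)))) S"
    for S
    unfolding interlacing_eq_interlacing_box[OF assms(2)] b_def[abs_def, symmetric] sum_apply
      sum_distrib_left
    using assms(1) degree by (intro sum.cong refl signed_esym_dops_Delta) auto
  then show ?thesis
    using sum_interlacing_box_Delta_eq_0[OF assms(1) strict_mono_on_imp_mono_on[OF b(1)] b(2,3)] by simp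
qed

end
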